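(* Let $\Lambda$ be a source-free, finite, primitive, non-empty $k$-graph with shift $\sigma$ on $\Lambda^\infty$, and let $\varphi=(\varphi_1,\dots,\varphi_k)$ be continuous real-valued functions on $\Lambda^\infty$ satisfying $\varphi_i+\varphi_j\circ\sigma_i=\varphi_j+\varphi_i\circ\sigma_j$ for all $i,j$, such that $(\Lambda^\infty,\sigma,\varphi)$ admits a unique solution $(\boldsymbol\lambda^\varphi,\mu^\varphi)$ for the positive eigenvalue problem of the dual of the Ruelle operator. Then $\mu^\varphi(\mathcal{Z}(\lambda))>0$ for every $\lambda\in\Lambda$.
   Context: $k$-graph: countable category $\Lambda$ with degree functor $d:\Lambda\to\mathbb{N}^k$ with unique factorization. finite: each $\Lambda^n=d^{-1}(n)$ finite; source-free: $v\Lambda^n\ne\varnothing$ for every vertex $v$ and $n$; primitive: some $n\ne0$ with $v\Lambda^nw\ne\varnothing$ for all vertices $v,w$. $\Lambda^\infty$: degree-preserving functors $x:\Omega_k\to\Lambda$ ($\Omega_k=\{(m,n):m\le n\}$, $d(m,n)=n-m$), cylinder sets $\mathcal{Z}(\lambda)=\{x:x(0,d(\lambda))=\lambda\}$. Shift: $\sigma_i(x)(m,n)=x(m+\mathbf{e}_i,n+\mathbf{e}_i)$. Ruelle operator $(\mathcal{L}_{T,\psi}f)(x)=\sum_{y\in T^{-1}(x)}e^{\psi(y)}f(y)$ with dual $\mathcal{L}^*$ on finite signed Borel measures. "Admits a unique solution...": unique $(\boldsymbol\lambda,\mu)$ with $\boldsymbol\lambda\in(0,\infty)^k$, $\mu$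 a Borel probability measure, $\mathcal{L}^*_{\sigma_i,\varphi_i}\mu=\lambda_i\mu$ for all $i$. *)

theory Defs
  imports "HOL-Analysis.Analysis" "HOL-Probability.Probability"
begin

text \<open>A k-graph is encoded as a small category whose objects are identified with
their identity morphisms.  The index set \<open>{1..k}\<close> of the degree monoid \<open>\<nat>^k\<close> is a
finite type \<open>'k\<close> (so k = CARD('k)); degrees are functions \<open>'k \<Rightarrow> nat\<close>, ordered
pointwise.\<close>

record ('a, 'k) kgraph =
  mor :: "'a set"
  rng :: "'a \<Rightarrow> 'a"
  src :: "'a \<Rightarrow> 'a"
  cmp :: "'a \<Rightarrow> 'a \<Rightarrow> 'a"
  deg :: "'a \<Rightarrow> 'k \<Rightarrow> nat"

definition deg_add :: "('k \<Rightarrow> nat) \<Rightarrow> ('k \<Rightarrow> nat) \<Rightarrow> 'k \<Rightarrow> nat" where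
  "deg_add m n = (\<lambda>i. m i + n i)"

definition deg_sub :: "('k \<Rightarrow> nat) \<Rightarrow> ('k \<Rightarrow> nat) \<Rightarrow> 'k \<Rightarrow> nat" where
  "deg_sub n m = (\<lambda>i. n i - m i)"

definition deg_zero :: "'k \<Rightarrow> nat" where
  "deg_zero = (\<lambda>i. 0)"

definition unit_vec :: "'k \<Rightarrow> 'k \<Rightarrow> nat" where
  "unit_vec i = (\<lambda>j. if j = i then 1 else 0)"

definition vertices :: "('a, 'k, 'b) kgraph_scheme \<Rightarrow> 'a set" where
  "vertices G = {v \<in> mor G. rng G v = v}"

definition is_kgraph :: "('a, 'k::finite, 'b) kgraph_scheme \<Rightarrow> bool" where
  "is_kgraph G \<longleftrightarrow>
     countable (mor G) \<and>
     (\<forall>l \<in> mor G. rng G l \<in> mor G \<and> src G l \<in> mor G \<and>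
        rng G (rng G l) = rng G l \<and> src G (rng G l) = rng G l \<and>
        rng G (src G l) = src G l \<and> src G (src G l) = src G l \<and>
        cmp G (rng G l) l = l \<and> cmp G l (src G l) = l) \<and>
     (\<forall>l \<in> mor G. \<forall>m \<in> mor G. src G l = rng G m \<longrightarrow>
        cmp G l m \<in> mor G \<and> rng G (cmp G l m) = rng G l \<and> src G (cmp G l m) = src G m \<and>
        deg G (cmp G l m) = deg_add (deg G l) (deg G m)) \<and>
     (\<forall>l \<in> mor G. \<forall>m \<in> mor G. \<forall>n \<in> mor G. src G l = rng G m \<longrightarrow> src G m = rng G n \<longrightarrow>
        cmp G (cmp G l m) n = cmp G l (cmp G m n)) \<and>
     (\<forall>l \<in> mor G. \<forall>m n. deg G l = deg_add m n \<longrightarrow>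
        (\<exists>!(p, q). p \<in> mor G \<and> q \<in> mor G \<and> src G p = rng G q \<and>
             deg G p = m \<and> deg G q = n \<and> cmp G p q = l))"

definition finite_kgraph :: "('a, 'k, 'b) kgraph_scheme \<Rightarrow> bool" where
  "finite_kgraph G \<longleftrightarrow> (\<forall>n. finite {l \<in> mor G. deg G l = n})"

definition source_free :: "('a, 'k, 'b) kgraph_scheme \<Rightarrow> bool" where
  "source_free G \<longleftrightarrow> (\<forall>v \<in> vertices G. \<forall>n. \<exists>l \<in> mor G. rng G l = v \<and> deg G l = n)"

definition primitive :: "('a, 'k, 'b) kgraph_scheme \<Rightarrow> bool" where
  "primitive G \<longleftrightarrow> (\<exists>n. n \<noteq> deg_zero \<and>
     (\<forall>v \<in> vertices G. \<forall>w \<in> vertices G. \<exists>l \<in> mor G. rng G l = v \<and> deg G l = n \<and> src G l = w))"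

text \<open>Infinite paths: degree-preserving functors \<open>\<Omega>_k \<rightarrow> \<Lambda>\<close>, where the morphism
\<open>(m,n)\<close> (\<open>m \<le> n\<close>) of \<open>\<Omega>_k\<close> has range \<open>m\<close>, source \<open>n\<close> and degree \<open>n - m\<close>.\<close>
definition inf_paths :: "('a, 'k, 'b) kgraph_scheme \<Rightarrow> (('k \<Rightarrow> nat) \<Rightarrow> ('k \<Rightarrow> nat) \<Rightarrow> 'a) set" where
  "inf_paths G = {x.
     (\<forall>m n. m \<le> n \<longrightarrow> x m n \<in> mor G \<and> deg G (x m n) = deg_sub n m \<and>
                      rng G (x m n) = x m m \<and> src G (x m n) = x n n) \<and>
     (\<forall>m n p. m \<le> n \<longrightarrow> n \<le> p \<longrightarrow> cmp G (x m n) (x n p) = x m p) \<and>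
     (\<forall>m n. \<not> m \<le> n \<longrightarrow> x m n = undefined)}"

definition shift :: "'k \<Rightarrow> (('k \<Rightarrow> nat) \<Rightarrow> ('k \<Rightarrow> nat) \<Rightarrow> 'a) \<Rightarrow> (('k \<Rightarrow> nat) \<Rightarrow> ('k \<Rightarrow> nat) \<Rightarrow> 'a)" where
  "shift i x = (\<lambda>m n. if m \<le> n then x (deg_add m (unit_vec i)) (deg_add n (unit_vec i)) else undefined)"

definition cylinder :: "('a, 'k, 'b) kgraph_scheme \<Rightarrow> 'a \<Rightarrow> (('k \<Rightarrow> nat) \<Rightarrow> ('k \<Rightarrow> nat) \<Rightarrow> 'a) set" where
  "cylinder G l = {x \<in> inf_paths G. x deg_zero (deg G l) = l}"

definition path_topology :: "('a, 'k, 'b) kgraph_scheme \<Rightarrow> (('k \<Rightarrow> nat) \<Rightarrow> ('k \<Rightarrow> nat) \<Rightarrow> 'a) topology" where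
  "path_topology G = topology_generated_by (cylinder G ` mor G)"

definition path_borel :: "('a, 'k, 'b) kgraph_scheme \<Rightarrow> (('k \<Rightarrow> nat) \<Rightarrow> ('k \<Rightarrow> nat) \<Rightarrow> 'a) measure" where
  "path_borel G = sigma (inf_paths G) {U. openin (path_topology G) U}"

definition ruelle :: "('a, 'k, 'b) kgraph_scheme \<Rightarrow> 'k \<Rightarrow>
    ((('k \<Rightarrow> nat) \<Rightarrow> ('k \<Rightarrow> nat) \<Rightarrow> 'a) \<Rightarrow> real) \<Rightarrow>
    ((('k \<Rightarrow> nat) \<Rightarrow> ('k \<Rightarrow> nat) \<Rightarrow> 'a) \<Rightarrow> real) \<Rightarrow>
    (('k \<Rightarrow> nat) \<Rightarrow> ('k \<Rightarrow> nat) \<Rightarrow> 'a) \<Rightarrow> real" where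
  "ruelle G i psi f x = (\<Sum>y \<in> {y \<in> inf_paths G. shift i y = x}. exp (psi y) * f y)"

text \<open>\<open>(\<lambda>, \<mu>)\<close> solves the eigenvalue problem for the duals of the Ruelle operators:
\<open>\<lambda> \<in> (0,\<infinity>)^k\<close>, \<open>\<mu>\<close> a Borel probability measure on \<open>\<Lambda>^\<infinity>\<close>, and
\<open>\<L>^*_{\<sigma>_i,\<phi>_i} \<mu> = \<lambda>_i \<mu>\<close>, i.e. \<open>\<mu>(\<L>_{\<sigma>_i,\<phi>_i} f) = \<lambda>_i \<mu>(f)\<close> for all \<open>f \<in> C(\<Lambda>^\<infinity>)\<close>.\<close>
definition is_eigen_solution :: "('a, 'k, 'b) kgraph_scheme \<Rightarrow>
    ('k \<Rightarrow> (('k \<Rightarrow> nat) \<Rightarrow> ('k \<Rightarrow> nat) \<Rightarrow> 'a) \<Rightarrow> real) \<Rightarrow>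
    ('k \<Rightarrow> real) \<times> (('k \<Rightarrow> nat) \<Rightarrow> ('k \<Rightarrow> nat) \<Rightarrow> 'a) measure \<Rightarrow> bool" where
  "is_eigen_solution G phi s \<longleftrightarrow>
     (case s of (lam, \<mu>) \<Rightarrow>
       (\<forall>i. lam i > 0) \<and> prob_space \<mu> \<and> sets \<mu> = sets (path_borel G) \<and>
       (\<forall>i f. continuous_map (path_topology G) euclideanreal f \<longrightarrow>
          (\<integral>x. ruelle G i (phi i) f x \<partial>\<mu>) = lam i * (\<integral>x. f x \<partial>\<mu>)))"

end

(*
  Let e be an edge of degree e_i with s(e) = r(l').  The shift sigma_i maps the cylinder
  Z(e l') bijectively onto Z(l'), and x |-> 1_{Z(e l')} exp(- phi_i) is continuous, so the
  dual eigen-equation for the Ruelle operator gives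
    mu(Z(l')) = lam_i * integral of 1_{Z(e l')} exp(- phi_i) d mu.
  Hence if Z(l) is mu-null, peeling off edges one at a time shows that Z(s(l)) is null.
  By primitivity every vertex w is the source of a path g with r(g) = s(l); then
  Z(g) is contained in Z(s(l)), so Z(g) and therefore Z(w) are null.  But the finitely many
  vertex cylinders cover the infinite path space, contradicting mu(Lambda^infinity) = 1.
*)

theory Submission
  imports Defs
begin

lemma deg_add_sub: "m \<le> n \<Longrightarrow> deg_add m (deg_sub n m) = n"
  by (auto simp: deg_add_def deg_sub_def fun_eq_iff le_fun_def)

lemma deg_sub_add: "deg_sub (deg_add m n) m = n"
  by (auto simp: deg_add_def deg_sub_def fun_eq_iff)

lemma deg_sub_zero [simp]: "deg_sub n deg_zero = n"
  by (auto simp: deg_sub_def deg_zero_def fun_eq_iff)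

lemma deg_add_left_cancel: "deg_add m a = deg_add m b \<Longrightarrow> a = b"
  by (auto simp: deg_add_def fun_eq_iff)

lemma deg_add_commute: "deg_add m n = deg_add n m"
  by (auto simp: deg_add_def fun_eq_iff)

lemma deg_add_zero_left [simp]: "deg_add deg_zero n = n"
  by (auto simp: deg_add_def deg_zero_def fun_eq_iff)

lemma deg_zero_le [simp]: "deg_zero \<le> n"
  by (auto simp: deg_zero_def le_fun_def)

lemma le_deg_add [simp]: "m \<le> deg_add m n" "m \<le> deg_add n m"
  by (auto simp: deg_add_def le_fun_def)

lemma deg_add_right_mono: "m \<le> n \<Longrightarrow> deg_add m u \<le> deg_add n u"
  by (auto simp: deg_add_def le_fun_def)

lemma deg_add_self_eq_zero: "deg_add n n = n \<Longrightarrow> n = deg_zero"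
  by (auto simp: deg_add_def deg_zero_def fun_eq_iff)

lemma
  assumes "x \<in> inf_paths G" "m \<le> n"
  shows inf_path_mor: "x m n \<in> mor G"
    and inf_path_deg: "deg G (x m n) = deg_sub n m"
    and inf_path_rng: "rng G (x m n) = x m m"
    and inf_path_src: "src G (x m n) = x n n"
  using assms unfolding inf_paths_def by blast+

lemma inf_path_cmp:
  "x \<in> inf_paths G \<Longrightarrow> m \<le> n \<Longrightarrow> n \<le> p \<Longrightarrow> cmp G (x m n) (x n p) = x m p"
  unfolding inf_paths_def by blast

lemma inf_path_undefined: "x \<in> inf_paths G \<Longrightarrow> \<not> m \<le> n \<Longrightarrow> x m n = undefined"
  unfolding inf_paths_def by blast

lemma inf_path_initial_deg [simp]: "x \<in> inf_paths G \<Longrightarrow> deg G (x deg_zero n) = n"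
  by (simp add: inf_path_deg)

lemma shift_apply: "m \<le> n \<Longrightarrow> shift i y m n = y (deg_add m (unit_vec i)) (deg_add n (unit_vec i))"
  unfolding shift_def by simp

lemma cylinder_subset_inf_paths: "cylinder G l \<subseteq> inf_paths G"
  unfolding cylinder_def by auto

definition path_prefix :: "('a, 'k, 'b) kgraph_scheme \<Rightarrow> 'a \<Rightarrow> ('k \<Rightarrow> nat) \<Rightarrow> 'a" where
  "path_prefix G l n = (THE p. \<exists>q. p \<in> mor G \<and> q \<in> mor G \<and> src G p = rng G q \<and>
     deg G p = n \<and> cmp G p q = l)"

definition connecting_segment ::
    "('a, 'k, 'b) kgraph_scheme \<Rightarrow> (('k \<Rightarrow> nat) \<Rightarrow> 'a) \<Rightarrow> ('k \<Rightarrow> nat) \<Rightarrow> ('k \<Rightarrow> nat) \<Rightarrow> 'a" where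
  "connecting_segment G P m n = (THE q. q \<in> mor G \<and> src G (P m) = rng G q \<and> cmp G (P m) q = P n)"

definition path_of_prefixes ::
    "('a, 'k, 'b) kgraph_scheme \<Rightarrow> (('k \<Rightarrow> nat) \<Rightarrow> 'a) \<Rightarrow> ('k \<Rightarrow> nat) \<Rightarrow> ('k \<Rightarrow> nat) \<Rightarrow> 'a" where
  "path_of_prefixes G P = (\<lambda>m n. if m \<le> n then connecting_segment G P m n else undefined)"

definition prepend ::
    "('a, 'k, 'b) kgraph_scheme \<Rightarrow> 'a \<Rightarrow> (('k \<Rightarrow> nat) \<Rightarrow> ('k \<Rightarrow> nat) \<Rightarrow> 'a) \<Rightarrow>
     ('k \<Rightarrow> nat) \<Rightarrow> ('k \<Rightarrow> nat) \<Rightarrow> 'a" where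
  "prepend G e x = path_of_prefixes G (\<lambda>n. path_prefix G (cmp G e (x deg_zero n)) n)"

locale k_graph =
  fixes G :: "('a, 'k::finite, 'b) kgraph_scheme"
  assumes is_kgraph: "is_kgraph G"
begin

lemma
  assumes "l \<in> mor G"
  shows rng_in_mor: "rng G l \<in> mor G"
    and src_in_mor: "src G l \<in> mor G"
    and rng_rng [simp]: "rng G (rng G l) = rng G l"
    and src_rng [simp]: "src G (rng G l) = rng G l"
    and rng_src [simp]: "rng G (src G l) = src G l"
    and cmp_rng_left [simp]: "cmp G (rng G l) l = l"
    and cmp_src_right [simp]: "cmp G l (src G l) = l"
  using is_kgraph assms unfolding is_kgraph_def by blast+

lemma
  assumes "l \<in> mor G" "m \<in> mor G" "src G l = rng G m"
  shows cmp_in_mor: "cmp G l m \<in> mor G"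
    and rng_cmp: "rng G (cmp G l m) = rng G l"
    and src_cmp: "src G (cmp G l m) = src G m"
    and deg_cmp: "deg G (cmp G l m) = deg_add (deg G l) (deg G m)"
  using is_kgraph assms unfolding is_kgraph_def by blast+

lemma cmp_assoc:
  assumes "l \<in> mor G" "m \<in> mor G" "n \<in> mor G" "src G l = rng G m" "src G m = rng G n"
  shows "cmp G (cmp G l m) n = cmp G l (cmp G m n)"
  using is_kgraph assms unfolding is_kgraph_def by blast

lemma factorisation_ex1:
  assumes "l \<in> mor G" "deg G l = deg_add m n"
  shows "\<exists>!(p, q). p \<in> mor G \<and> q \<in> mor G \<and> src G p = rng G q \<and>
    deg G p = m \<and> deg G q = n \<and> cmp G p q = l"
  using is_kgraph assms unfolding is_kgraph_def by blast

lemma factorisation_exists: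
  assumes "l \<in> mor G" "deg G l = deg_add m n"
  obtains p q where "p \<in> mor G" "q \<in> mor G" "src G p = rng G q"
    "deg G p = m" "deg G q = n" "cmp G p q = l"
  using factorisation_ex1[OF assms] that by (auto dest: ex1_implies_ex)

lemma factorisation_unique:
  assumes pq: "p \<in> mor G" "q \<in> mor G" "src G p = rng G q"
    and pq': "p' \<in> mor G" "q' \<in> mor G" "src G p' = rng G q'"
    and "deg G p = deg G p'" and "cmp G p q = cmp G p' q'"
  shows "p = p' \<and> q = q'"
proof -
  have "deg G q = deg G q'"
    using assms deg_cmp by (metis deg_add_left_cancel)
  obtain z where "\<And>w. (case w of (a, b) \<Rightarrow> a \<in> mor G \<and> b \<in> mor G \<and> src G a = rng G b \<and>
      deg G a = deg G p \<and> deg G b = deg G q \<and> cmp G a b = cmp G p q) \<Longrightarrow> w = z"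
    using factorisation_ex1[OF cmp_in_mor[OF pq] deg_cmp[OF pq]] by blast
  then have "(p, q) = z" "(p', q') = z"
    using assms \<open>deg G q = deg G q'\<close> by simp_all
  then show ?thesis by (metis prod.inject)
qed

lemma deg_vertex:
  assumes "v \<in> mor G" "rng G v = v"
  shows "deg G v = deg_zero"
proof -
  have "src G v = v" using assms src_rng by metis
  then have "deg_add (deg G v) (deg G v) = deg G v"
    using assms deg_cmp cmp_rng_left by metis
  then show ?thesis by (rule deg_add_self_eq_zero)
qed

lemma deg_zero_vertex:
  assumes "l \<in> mor G" "deg G l = deg_zero"
  shows "rng G l = l" "src G l = l"
proof -
  have "deg G (rng G l) = deg G l"
    using assms deg_vertex rng_in_mor rng_rng by metis
  then show "rng G l = l" "src G l = l"
    using factorisation_unique[of "rng G l" l l "src G l"] assms rng_in_mor src_in_mor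
    by simp_all
qed

lemma vertices_eq: "vertices G = {v \<in> mor G. deg G v = deg_zero}"
  unfolding vertices_def using deg_vertex deg_zero_vertex by auto

lemma path_prefix_eq:
  assumes "p \<in> mor G" "q \<in> mor G" "src G p = rng G q"
  shows "path_prefix G (cmp G p q) (deg G p) = p"
  unfolding path_prefix_def
proof (rule the_equality)
  show "\<exists>q'. p \<in> mor G \<and> q' \<in> mor G \<and> src G p = rng G q' \<and> deg G p = deg G p \<and>
      cmp G p q' = cmp G p q"
    using assms by blast
next
  fix p'
  assume "\<exists>q'. p' \<in> mor G \<and> q' \<in> mor G \<and> src G p' = rng G q' \<and> deg G p' = deg G p \<and>
      cmp G p' q' = cmp G p q"
  then show "p' = p"
    using factorisation_unique assms by metis
qed

lemma path_prefix_factor: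
  assumes "l \<in> mor G" "n \<le> deg G l"
  obtains q where "path_prefix G l n \<in> mor G" "q \<in> mor G" "src G (path_prefix G l n) = rng G q"
    "deg G (path_prefix G l n) = n" "cmp G (path_prefix G l n) q = l"
proof -
  obtain p q where pq: "p \<in> mor G" "q \<in> mor G" "src G p = rng G q" "deg G p = n" "cmp G p q = l"
    using factorisation_exists[OF assms(1) deg_add_sub[OF assms(2), symmetric]] by blast
  moreover have "path_prefix G l n = p"
    using path_prefix_eq[OF pq(1-3)] pq by simp
  ultimately show ?thesis
    using that[of q] by simp
qed

lemma path_prefix_cmp:
  assumes "l \<in> mor G" "r \<in> mor G" "src G l = rng G r" "n \<le> deg G l"
  shows "path_prefix G (cmp G l r) n = path_prefix G l n"
proof -
  obtain s where s: "path_prefix G l n \<in> mor G" "s \<in> mor G" "src G (path_prefix G l n) = rng G s"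
      "deg G (path_prefix G l n) = n" "cmp G (path_prefix G l n) s = l"
    by (rule path_prefix_factor[OF assms(1,4)])
  have "src G s = rng G r"
    using src_cmp[OF s(1-3)] s(5) assms(3) by simp
  then have "cmp G l r = cmp G (path_prefix G l n) (cmp G s r)"
    using cmp_assoc[OF s(1,2) assms(2) s(3)] s(5) by simp
  then show ?thesis
    using path_prefix_eq[OF s(1) cmp_in_mor[OF s(2) assms(2)]] rng_cmp[OF s(2) assms(2)] s
      \<open>src G s = rng G r\<close>
    by simp
qed

lemma path_prefix_extends:
  assumes "l \<in> mor G" "n \<le> n'" "n' \<le> deg G l"
  shows "\<exists>q \<in> mor G. src G (path_prefix G l n) = rng G q \<and>
    cmp G (path_prefix G l n) q = path_prefix G l n'"
proof -
  let ?p = "path_prefix G l n'"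
  obtain t where t: "?p \<in> mor G" "t \<in> mor G" "src G ?p = rng G t" "deg G ?p = n'" "cmp G ?p t = l"
    by (rule path_prefix_factor[OF assms(1,3)])
  obtain a b where ab: "a \<in> mor G" "b \<in> mor G" "src G a = rng G b" "deg G a = n" "cmp G a b = ?p"
    using factorisation_exists[OF t(1), of n "deg_sub n' n"] deg_add_sub[OF assms(2)] t(4) by metis
  have "src G b = rng G t"
    using src_cmp[OF ab(1-3)] ab(5) t(3) by simp
  then have "l = cmp G a (cmp G b t)"
    using cmp_assoc[OF ab(1,2) t(2) ab(3)] ab(5) t(5) by simp
  then have "path_prefix G l n = a"
    using path_prefix_eq[OF ab(1) cmp_in_mor[OF ab(2) t(2)]] rng_cmp[OF ab(2) t(2)] ab
      \<open>src G b = rng G t\<close>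
    by simp
  then show ?thesis
    using ab by blast
qed

lemma connecting_segment_eq:
  assumes "P m \<in> mor G" "q \<in> mor G" "src G (P m) = rng G q" "cmp G (P m) q = P n"
  shows "connecting_segment G P m n = q"
  unfolding connecting_segment_def
proof (rule the_equality)
  show "q \<in> mor G \<and> src G (P m) = rng G q \<and> cmp G (P m) q = P n"
    using assms by blast
next
  fix q'
  assume "q' \<in> mor G \<and> src G (P m) = rng G q' \<and> cmp G (P m) q' = P n"
  then show "q' = q"
    using factorisation_unique[OF assms(1) _ _ assms(1-3)] assms(4) by metis
qed

lemma inf_path_eq_connecting_segment:
  assumes "x \<in> inf_paths G" "m \<le> n"
  shows "x m n = connecting_segment G (x deg_zero) m n"
  by (rule connecting_segment_eq[symmetric])
    (simp_all add: assms inf_path_mor inf_path_rng inf_path_src inf_path_cmp)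

lemma inf_paths_eqI:
  assumes "x \<in> inf_paths G" "y \<in> inf_paths G" "\<And>n. x deg_zero n = y deg_zero n"
  shows "x = y"
proof (intro ext)
  fix m n
  show "x m n = y m n"
  proof (cases "m \<le> n")
    case True
    have "x deg_zero = y deg_zero"
      using assms(3) by blast
    then show ?thesis
      using inf_path_eq_connecting_segment[OF assms(1) True]
        inf_path_eq_connecting_segment[OF assms(2) True]
      by simp
  next
    case False
    then show ?thesis
      using inf_path_undefined assms(1,2) by metis
  qed
qed

context
  fixes P :: "('k \<Rightarrow> nat) \<Rightarrow> 'a"
  assumes prefix_mor: "\<And>n. P n \<in> mor G"
    and prefix_deg: "\<And>n. deg G (P n) = n"
    and prefix_extends: "\<And>n n'. n \<le> n' \<Longrightarrow>
      \<exists>q \<in> mor G. src G (P n) = rng G q \<and> cmp G (P n) q = P n'"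
begin

lemma connecting_segment_props:
  assumes "m \<le> n"
  defines "s \<equiv> connecting_segment G P m n"
  shows "s \<in> mor G" "src G (P m) = rng G s" "cmp G (P m) s = P n"
    "deg G s = deg_sub n m" "src G s = src G (P n)"
proof -
  obtain q where q: "q \<in> mor G" "src G (P m) = rng G q" "cmp G (P m) q = P n"
    using prefix_extends[OF assms(1)] by blast
  have "s = q"
    unfolding s_def by (rule connecting_segment_eq[OF prefix_mor q])
  moreover have "n = deg_add m (deg G q)"
    using deg_cmp[OF prefix_mor q(1,2)] q(3) prefix_deg by simp
  moreover have "src G q = src G (P n)"
    using src_cmp[OF prefix_mor q(1,2)] q(3) by simp
  ultimately show "s \<in> mor G" "src G (P m) = rng G s" "cmp G (P m) s = P n"
    "deg G s = deg_sub n m" "src G s = src G (P n)"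
    using q deg_sub_add by metis+
qed

lemma connecting_segment_diag: "connecting_segment G P m m = src G (P m)"
  by (rule connecting_segment_eq) (simp_all add: prefix_mor src_in_mor)

lemma path_of_prefixes_in_inf_paths: "path_of_prefixes G P \<in> inf_paths G"
  unfolding inf_paths_def
proof (intro CollectI conjI allI impI)
  let ?x = "path_of_prefixes G P"
  fix m n :: "'k \<Rightarrow> nat"
  assume mn: "m \<le> n"
  note seg = connecting_segment_props[OF mn]
  have "?x m n = connecting_segment G P m n" "?x m m = src G (P m)" "?x n n = src G (P n)"
    using mn connecting_segment_diag unfolding path_of_prefixes_def by simp_all
  then show "?x m n \<in> mor G" "deg G (?x m n) = deg_sub n m"
    "rng G (?x m n) = ?x m m" "src G (?x m n) = ?x n n"
    using seg by simp_all
next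
  fix m n p :: "'k \<Rightarrow> nat"
  assume mn: "m \<le> n" and np: "n \<le> p"
  note seg = connecting_segment_props[OF mn] and seg' = connecting_segment_props[OF np]
  let ?s = "connecting_segment G P m n" and ?s' = "connecting_segment G P n p"
  have adj: "src G ?s = rng G ?s'"
    using seg(5) seg'(2) by simp
  have "cmp G (P m) (cmp G ?s ?s') = cmp G (cmp G (P m) ?s) ?s'"
    using cmp_assoc[OF prefix_mor seg(1) seg'(1) seg(2) adj] by (rule sym)
  also have "\<dots> = P p"
    using seg(3) seg'(3) by simp
  finally have "connecting_segment G P m p = cmp G ?s ?s'"
    by (intro connecting_segment_eq prefix_mor cmp_in_mor[OF seg(1) seg'(1) adj])
      (simp add: rng_cmp[OF seg(1) seg'(1) adj] seg(2))
  then show "cmp G (path_of_prefixes G P m n) (path_of_prefixes G P n p) = path_of_prefixes G P m p"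
    using mn np order_trans[OF mn np] unfolding path_of_prefixes_def by simp
next
  fix m n :: "'k \<Rightarrow> nat"
  assume "\<not> m \<le> n"
  then show "path_of_prefixes G P m n = undefined"
    unfolding path_of_prefixes_def by simp
qed

lemma path_of_prefixes_initial: "path_of_prefixes G P deg_zero n = P n"
proof -
  note vertex = deg_zero_vertex[OF prefix_mor prefix_deg]
  obtain q where q: "q \<in> mor G" "src G (P deg_zero) = rng G q" "cmp G (P deg_zero) q = P n"
    using prefix_extends[of deg_zero n] by auto
  have "rng G (P n) = P deg_zero"
    using rng_cmp[OF prefix_mor q(1,2)] q(3) vertex by simp
  moreover have "cmp G (rng G (P n)) (P n) = P n"
    using prefix_mor by simp
  ultimately have "connecting_segment G P deg_zero n = P n"
    by (intro connecting_segment_eq prefix_mor) (simp_all add: vertex)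
  then show ?thesis
    unfolding path_of_prefixes_def by simp
qed

end

context
  fixes e :: 'a and x :: "('k \<Rightarrow> nat) \<Rightarrow> ('k \<Rightarrow> nat) \<Rightarrow> 'a"
  assumes path: "x \<in> inf_paths G" and edge: "e \<in> mor G"
    and edge_src: "src G e = x deg_zero deg_zero"
begin

lemma
  shows extended_initial_mor: "cmp G e (x deg_zero n) \<in> mor G"
    and extended_initial_deg: "deg G (cmp G e (x deg_zero n)) = deg_add (deg G e) n"
    and extended_initial_src: "src G (cmp G e (x deg_zero n)) = x n n"
proof -
  have x0: "x deg_zero n \<in> mor G" "src G e = rng G (x deg_zero n)"
    using inf_path_mor[OF path] inf_path_rng[OF path] edge_src by simp_all
  show "cmp G e (x deg_zero n) \<in> mor G"
    "deg G (cmp G e (x deg_zero n)) = deg_add (deg G e) n"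
    "src G (cmp G e (x deg_zero n)) = x n n"
    using cmp_in_mor[OF edge x0] deg_cmp[OF edge x0] src_cmp[OF edge x0] path
    by (simp_all add: inf_path_src)
qed

lemma extended_initial_cmp:
  assumes "n \<le> n'"
  shows "cmp G e (x deg_zero n') = cmp G (cmp G e (x deg_zero n)) (x n n')"
proof -
  have "cmp G e (x deg_zero n') = cmp G e (cmp G (x deg_zero n) (x n n'))"
    using inf_path_cmp[OF path deg_zero_le assms] by simp
  also have "\<dots> = cmp G (cmp G e (x deg_zero n)) (x n n')"
    using path assms edge edge_src
    by (intro cmp_assoc[symmetric]) (simp_all add: inf_path_mor inf_path_rng inf_path_src)
  finally show ?thesis .
qed

lemma prepend_prefixes:
  defines "P \<equiv> \<lambda>n. path_prefix G (cmp G e (x deg_zero n)) n"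
  shows "P n \<in> mor G" "deg G (P n) = n"
    and "n \<le> n' \<Longrightarrow> \<exists>q \<in> mor G. src G (P n) = rng G q \<and> cmp G (P n) q = P n'"
proof -
  have le_deg: "n \<le> deg G (cmp G e (x deg_zero n))" for n
    using extended_initial_deg by simp
  show "P n \<in> mor G" "deg G (P n) = n"
    unfolding P_def using path_prefix_factor[OF extended_initial_mor le_deg] by metis+
  assume "n \<le> n'"
  then have "P n = path_prefix G (cmp G e (x deg_zero n')) n"
    unfolding P_def extended_initial_cmp[OF \<open>n \<le> n'\<close>]
    using path \<open>n \<le> n'\<close> le_deg
    by (intro path_prefix_cmp[symmetric] extended_initial_mor)
      (simp_all add: extended_initial_src inf_path_mor inf_path_rng)
  then show "\<exists>q \<in> mor G. src G (P n) = rng G q \<and> cmp G (P n) q = P n'"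
    unfolding P_def
    using path_prefix_extends[OF extended_initial_mor \<open>n \<le> n'\<close> le_deg] by simp
qed

lemma prepend_in_inf_paths: "prepend G e x \<in> inf_paths G"
  unfolding prepend_def using prepend_prefixes by (rule path_of_prefixes_in_inf_paths)

lemma prepend_prefix_after_edge:
  "path_prefix G (cmp G e (x deg_zero (deg_add n (deg G e)))) (deg_add n (deg G e)) =
    cmp G e (x deg_zero n)"
  using path_prefix_eq[OF extended_initial_mor[of n], of "x n (deg_add n (deg G e))"]
    extended_initial_cmp[of n "deg_add n (deg G e)"] path
  by (simp add: extended_initial_deg extended_initial_src inf_path_mor inf_path_rng
      deg_add_commute)

lemma prepend_initial_after_edge:
  "prepend G e x deg_zero (deg_add n (deg G e)) = cmp G e (x deg_zero n)"
  unfolding prepend_def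
  by (simp add: path_of_prefixes_initial[OF prepend_prefixes] prepend_prefix_after_edge)

lemma prepend_first_edge: "prepend G e x deg_zero (deg G e) = e"
  using prepend_initial_after_edge[of deg_zero] cmp_src_right[OF edge] edge_src by simp

lemma prepend_after_edge:
  assumes "m \<le> n"
  shows "prepend G e x (deg_add m (deg G e)) (deg_add n (deg G e)) = x m n"
proof -
  have "connecting_segment G (\<lambda>n. path_prefix G (cmp G e (x deg_zero n)) n)
      (deg_add m (deg G e)) (deg_add n (deg G e)) = x m n"
    using path assms
    by (intro connecting_segment_eq)
      (simp_all add: prepend_prefix_after_edge extended_initial_mor extended_initial_src
        extended_initial_cmp[symmetric] inf_path_mor inf_path_rng)
  then show ?thesis
    unfolding prepend_def path_of_prefixes_def using deg_add_right_mono[OF assms] by simp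
qed

end

lemma shift_prepend:
  assumes "x \<in> inf_paths G" "e \<in> mor G" "src G e = x deg_zero deg_zero" "deg G e = unit_vec i"
  shows "shift i (prepend G e x) = x"
proof (intro ext)
  fix m n
  show "shift i (prepend G e x) m n = x m n"
    using prepend_after_edge[OF assms(1-3), of m n] inf_path_undefined[OF assms(1), of m n] assms(4)
    unfolding shift_def by auto
qed

lemma inf_path_initial_eq_prefix:
  assumes "z \<in> inf_paths G"
  shows "z deg_zero n = path_prefix G (cmp G (z deg_zero (unit_vec i)) (shift i z deg_zero n)) n"
proof -
  let ?u = "unit_vec i"
  have "cmp G (z deg_zero ?u) (shift i z deg_zero n) = z deg_zero (deg_add n ?u)"
    using inf_path_cmp[OF assms, of deg_zero ?u "deg_add n ?u"] by (simp add: shift_apply)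
  also have "\<dots> = cmp G (z deg_zero n) (z n (deg_add n ?u))"
    using inf_path_cmp[OF assms, of deg_zero n "deg_add n ?u"] by simp
  finally show ?thesis
    using path_prefix_eq[of "z deg_zero n" "z n (deg_add n ?u)"] assms
    by (simp add: inf_path_mor inf_path_rng inf_path_src)
qed

lemma shift_preimage_eqI:
  assumes "y \<in> inf_paths G" "y' \<in> inf_paths G" "shift i y = shift i y'"
    and "y deg_zero (unit_vec i) = y' deg_zero (unit_vec i)"
  shows "y = y'"
proof (rule inf_paths_eqI[OF assms(1,2)])
  fix n
  have "y deg_zero n = path_prefix G (cmp G (y deg_zero (unit_vec i)) (shift i y deg_zero n)) n"
    by (rule inf_path_initial_eq_prefix[OF assms(1)])
  also have "\<dots> = path_prefix G (cmp G (y' deg_zero (unit_vec i)) (shift i y' deg_zero n)) n"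
    using assms(3,4) by simp
  also have "\<dots> = y' deg_zero n"
    by (rule inf_path_initial_eq_prefix[OF assms(2), symmetric])
  finally show "y deg_zero n = y' deg_zero n" .
qed

lemma finite_shift_preimages:
  assumes "finite_kgraph G"
  shows "finite {y \<in> inf_paths G. shift i y = x}"
proof (rule finite_imageD)
  let ?Y = "{y \<in> inf_paths G. shift i y = x}"
  have "(\<lambda>y. y deg_zero (unit_vec i)) ` ?Y \<subseteq> {l \<in> mor G. deg G l = unit_vec i}"
    by (auto simp: inf_path_mor)
  then show "finite ((\<lambda>y. y deg_zero (unit_vec i)) ` ?Y)"
    using assms unfolding finite_kgraph_def by (blast intro: finite_subset)
  show "inj_on (\<lambda>y. y deg_zero (unit_vec i)) ?Y"
    by (rule inj_onI) (metis (mono_tags, lifting) mem_Collect_eq shift_preimage_eqI)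
qed

context
  fixes e l' i
  assumes edge: "e \<in> mor G" "deg G e = unit_vec i"
    and composable: "l' \<in> mor G" "src G e = rng G l'"
begin

lemma shift_preimage_in_cylinder_cmp:
  assumes "y \<in> cylinder G (cmp G e l')" "shift i y \<in> inf_paths G"
  shows "y deg_zero (unit_vec i) = e" "shift i y \<in> cylinder G l'"
proof -
  let ?u = "unit_vec i" and ?l = "cmp G e l'"
  have y: "y \<in> inf_paths G" "y deg_zero (deg G ?l) = ?l"
    using assms(1) unfolding cylinder_def by simp_all
  have dl: "deg G ?l = deg_add (deg G l') ?u"
    using deg_cmp[OF edge(1) composable] edge(2) deg_add_commute by metis
  then have ul: "?u \<le> deg G ?l"
    by simp
  have "cmp G (y deg_zero ?u) (y ?u (deg G ?l)) = cmp G e l'"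
    using inf_path_cmp[OF y(1) deg_zero_le ul] y(2) by simp
  then have "y deg_zero ?u = e \<and> y ?u (deg G ?l) = l'"
    using y(1) ul edge composable
    by (intro factorisation_unique) (simp_all add: inf_path_mor inf_path_rng inf_path_src)
  moreover have "shift i y deg_zero (deg G l') = y ?u (deg G ?l)"
    using dl by (simp add: shift_apply)
  ultimately show "y deg_zero ?u = e" "shift i y \<in> cylinder G l'"
    using assms(2) unfolding cylinder_def by simp_all
qed

lemma shift_preimages_in_cylinder_cmp:
  assumes x: "x \<in> inf_paths G"
  shows "{y \<in> inf_paths G. shift i y = x} \<inter> cylinder G (cmp G e l') =
    (if x \<in> cylinder G l' then {prepend G e x} else {})"
proof (cases "x \<in> cylinder G l'")
  case True
  then have "src G e = x deg_zero deg_zero"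
    using composable inf_path_rng[OF x, of deg_zero "deg G l'"] unfolding cylinder_def by simp
  note prepend = prepend_in_inf_paths[OF x edge(1) this] shift_prepend[OF x edge(1) this edge(2)]
    prepend_initial_after_edge[OF x edge(1) this] prepend_first_edge[OF x edge(1) this]
  have "deg G (cmp G e l') = deg_add (deg G l') (deg G e)"
    using deg_cmp[OF edge(1) composable] deg_add_commute by metis
  then have "prepend G e x \<in> cylinder G (cmp G e l')"
    using prepend(1,3) True unfolding cylinder_def by simp
  moreover have "y = prepend G e x"
    if "y \<in> inf_paths G" "shift i y = x" "y \<in> cylinder G (cmp G e l')" for y
  proof (rule shift_preimage_eqI[OF that(1) prepend(1)])
    show "shift i y = shift i (prepend G e x)"
      using that(2) prepend(2) by simp
    show "y deg_zero (unit_vec i) = prepend G e x deg_zero (unit_vec i)"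
      using shift_preimage_in_cylinder_cmp(1)[OF that(3)] that(2) x prepend(4) edge(2) by simp
  qed
  ultimately have "{y \<in> inf_paths G. shift i y = x} \<inter> cylinder G (cmp G e l') = {prepend G e x}"
    using prepend(1,2) by blast
  then show ?thesis
    using True by simp
next
  case False
  have "y \<notin> cylinder G (cmp G e l')" if "shift i y = x" for y
  proof
    assume "y \<in> cylinder G (cmp G e l')"
    then have "shift i y \<in> cylinder G l'"
      using that x by (intro shift_preimage_in_cylinder_cmp(2)) simp_all
    then show False
      using that False by simp
  qed
  then show ?thesis
    using False by auto
qed

lemma ruelle_indicator_cylinder_cmp:
  assumes "finite_kgraph G" "x \<in> inf_paths G"
  shows "ruelle G i psi (\<lambda>y. indicator (cylinder G (cmp G e l')) y * exp (- psi y)) x =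
    indicator (cylinder G l') x"
proof -
  let ?Y = "{y \<in> inf_paths G. shift i y = x}"
  have "ruelle G i psi (\<lambda>y. indicator (cylinder G (cmp G e l')) y * exp (- psi y)) x =
      (\<Sum>y \<in> ?Y. indicator (cylinder G (cmp G e l')) y)"
    unfolding ruelle_def by (intro sum.cong) (simp_all add: exp_minus)
  also have "\<dots> = real (card (?Y \<inter> cylinder G (cmp G e l')))"
    using finite_shift_preimages[OF assms(1)] by (simp add: indicator_def sum.If_cases Int_def)
  also have "\<dots> = indicator (cylinder G l') x"
    unfolding shift_preimages_in_cylinder_cmp[OF assms(2)] by simp
  finally show ?thesis .
qed

end

lemma first_edge_factorisation:
  assumes "l \<in> mor G" "deg G l \<noteq> deg_zero"
  obtains e l' i where "e \<in> mor G" "l' \<in> mor G" "src G e = rng G l'" "deg G e = unit_vec i"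
    "cmp G e l' = l" "src G l' = src G l" "(\<Sum>j\<in>UNIV. deg G l' j) < (\<Sum>j\<in>UNIV. deg G l j)"
proof -
  obtain i where "deg G l i \<noteq> 0"
    using assms(2) unfolding deg_zero_def by auto
  then have "unit_vec i \<le> deg G l"
    unfolding unit_vec_def le_fun_def by auto
  then obtain e l' where el: "e \<in> mor G" "l' \<in> mor G" "src G e = rng G l'" "deg G e = unit_vec i"
      "cmp G e l' = l"
    using factorisation_exists[OF assms(1)] deg_add_sub by metis
  then have "deg G l = deg_add (unit_vec i) (deg G l')"
    using deg_cmp by metis
  then have "(\<Sum>j\<in>UNIV. deg G l j) = 1 + (\<Sum>j\<in>UNIV. deg G l' j)"
    by (simp add: deg_add_def sum.distrib unit_vec_def)
  moreover have "src G l' = src G l"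
    using src_cmp el by metis
  ultimately show ?thesis
    using that el by simp
qed

lemma cylinder_subset_cylinder_rng:
  assumes "l \<in> mor G"
  shows "cylinder G l \<subseteq> cylinder G (rng G l)"
proof
  fix x
  assume "x \<in> cylinder G l"
  then have "x \<in> inf_paths G" "x deg_zero deg_zero = rng G l"
    using inf_path_rng[of x G deg_zero "deg G l"] unfolding cylinder_def by auto
  then show "x \<in> cylinder G (rng G l)"
    using deg_vertex[OF rng_in_mor[OF assms]] assms unfolding cylinder_def by simp
qed

lemma finite_vertices: "finite_kgraph G \<Longrightarrow> finite (vertices G)"
  unfolding finite_kgraph_def vertices_eq by blast

lemma inf_paths_subset_vertex_cylinders: "inf_paths G \<subseteq> (\<Union>v \<in> vertices G. cylinder G v)"
proof
  fix x
  assume x: "x \<in> inf_paths G"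
  then have "x deg_zero deg_zero \<in> vertices G" "x \<in> cylinder G (x deg_zero deg_zero)"
    unfolding vertices_def cylinder_def by (simp_all add: inf_path_mor inf_path_rng)
  then show "x \<in> (\<Union>v \<in> vertices G. cylinder G v)"
    by blast
qed

end

lemma topspace_path_topology: "topspace (path_topology G) = inf_paths G"
proof -
  have "x \<in> cylinder G (x deg_zero deg_zero)" "x deg_zero deg_zero \<in> mor G" if "x \<in> inf_paths G" for x
    using that unfolding cylinder_def by (simp_all add: inf_path_mor)
  then show ?thesis
    unfolding path_topology_def using cylinder_subset_inf_paths[of G] by auto
qed

lemma openin_path_topology_subset: "{U. openin (path_topology G) U} \<subseteq> Pow (inf_paths G)"
  using openin_subset topspace_path_topology by blast

lemma openin_cylinder: "l \<in> mor G \<Longrightarrow> openin (path_topology G) (cylinder G l)"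
  unfolding path_topology_def by (rule topology_generated_by_Basis) simp

lemma openin_diff_cylinder:
  assumes "l \<in> mor G"
  shows "openin (path_topology G) (inf_paths G - cylinder G l)"
proof -
  have "inf_paths G - cylinder G l = (\<Union>b \<in> {b \<in> mor G. deg G b = deg G l \<and> b \<noteq> l}. cylinder G b)"
    unfolding cylinder_def by (auto simp: inf_path_mor)
  then show ?thesis
    by (auto intro!: openin_Union openin_cylinder)
qed

lemma continuous_map_indicator_cylinder:
  assumes "l \<in> mor G"
  shows "continuous_map (path_topology G) euclideanreal (indicator (cylinder G l))"
  unfolding continuous_map_def
proof safe
  fix U :: "real set"
  have "openin (path_topology G)
      ((if 1 \<in> U then cylinder G l else {}) \<union> (if 0 \<in> U then inf_paths G - cylinder G l else {}))"
    using openin_cylinder[OF assms] openin_diff_cylinder[OF assms] by (intro openin_Un) simp_all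
  moreover have "{x \<in> topspace (path_topology G). indicator (cylinder G l) x \<in> U} =
      (if 1 \<in> U then cylinder G l else {}) \<union> (if 0 \<in> U then inf_paths G - cylinder G l else {})"
    using cylinder_subset_inf_paths[of G l] unfolding topspace_path_topology
    by (auto simp: indicator_def)
  ultimately show "openin (path_topology G) {x \<in> topspace (path_topology G). indicator (cylinder G l) x \<in> U}"
    by simp
qed auto

locale ruelle_eigen_measure = k_graph G for G :: "('a, 'k::finite, 'b) kgraph_scheme" +
  fixes phi :: "'k \<Rightarrow> (('k \<Rightarrow> nat) \<Rightarrow> ('k \<Rightarrow> nat) \<Rightarrow> 'a) \<Rightarrow> real"
    and lam :: "'k \<Rightarrow> real"
    and \<mu> :: "(('k \<Rightarrow> nat) \<Rightarrow> ('k \<Rightarrow> nat) \<Rightarrow> 'a) measure"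
  assumes finite_graph: "finite_kgraph G"
    and continuous_phi: "\<And>i. continuous_map (path_topology G) euclideanreal (phi i)"
    and eigen_solution: "is_eigen_solution G phi (lam, \<mu>)"
begin

sublocale prob_space \<mu>
  using eigen_solution unfolding is_eigen_solution_def by simp

lemma sets_eq: "sets \<mu> = sigma_sets (inf_paths G) {U. openin (path_topology G) U}"
  using eigen_solution sets_measure_of[OF openin_path_topology_subset]
  by (simp add: is_eigen_solution_def path_borel_def)

lemma space_eq: "space \<mu> = inf_paths G"
proof -
  have "space \<mu> = space (path_borel G)"
    using eigen_solution by (intro sets_eq_imp_space_eq) (simp add: is_eigen_solution_def)
  then show ?thesis
    by (simp add: path_borel_def space_measure_of_conv)
qed

lemma sets_cylinder: "l \<in> mor G \<Longrightarrow> cylinder G l \<in> sets \<mu>"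
  unfolding sets_eq by (rule sigma_sets.Basic) (simp add: openin_cylinder)

lemma integral_ruelle:
  "continuous_map (path_topology G) euclideanreal f \<Longrightarrow>
    (\<integral>x. ruelle G i (phi i) f x \<partial>\<mu>) = lam i * (\<integral>x. f x \<partial>\<mu>)"
  using eigen_solution unfolding is_eigen_solution_def by simp

lemma null_cylinder_cmp_imp_null:
  assumes edge: "e \<in> mor G" "deg G e = unit_vec i"
    and composable: "l' \<in> mor G" "src G e = rng G l'"
    and null: "measure \<mu> (cylinder G (cmp G e l')) = 0"
  shows "measure \<mu> (cylinder G l') = 0"
proof -
  let ?f = "\<lambda>y. indicator (cylinder G (cmp G e l')) y * exp (- phi i y)"
  have "continuous_map (path_topology G) euclideanreal (exp \<circ> (\<lambda>y. - phi i y))"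
    using continuous_phi
    by (intro continuous_map_compose[where X' = euclideanreal] continuous_map_minus)
      (simp_all add: continuous_on_exp)
  then have "continuous_map (path_topology G) euclideanreal ?f"
    using continuous_map_indicator_cylinder[OF cmp_in_mor[OF edge(1) composable]]
    by (intro continuous_map_real_mult) (simp_all add: o_def)
  moreover have "(\<integral>x. ?f x \<partial>\<mu>) = 0"
  proof (rule integral_eq_zero_AE)
    have "cylinder G (cmp G e l') \<in> null_sets \<mu>"
      using sets_cylinder[OF cmp_in_mor[OF edge(1) composable]] null by (simp add: null_sets_def emeasure_eq_measure)
    then show "AE x in \<mu>. ?f x = 0"
      by (rule AE_not_in[THEN eventually_mono]) simp
  qed
  ultimately have "(\<integral>x. ruelle G i (phi i) ?f x \<partial>\<mu>) = 0"
    by (simp add: integral_ruelle)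
  moreover have "(\<integral>x. ruelle G i (phi i) ?f x \<partial>\<mu>) = (\<integral>x. indicator (cylinder G l') x \<partial>\<mu>)"
    using ruelle_indicator_cylinder_cmp[OF edge composable finite_graph] space_eq
    by (intro Bochner_Integration.integral_cong) simp_all
  ultimately show ?thesis
    using sets_cylinder[OF composable(1)] by simp
qed

lemma null_cylinder_imp_null_src:
  assumes "l \<in> mor G" "measure \<mu> (cylinder G l) = 0"
  shows "measure \<mu> (cylinder G (src G l)) = 0"
  using assms
proof (induction "\<Sum>j\<in>UNIV. deg G l j" arbitrary: l rule: less_induct)
  case less
  show ?case
  proof (cases "deg G l = deg_zero")
    case True
    then show ?thesis
      using less.prems deg_zero_vertex by simp
  next
    case False
    then obtain e l' i where "e \<in> mor G" "l' \<in> mor G" "src G e = rng G l'" "deg G e = unit_vec i"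
      "cmp G e l' = l" "src G l' = src G l" "(\<Sum>j\<in>UNIV. deg G l' j) < (\<Sum>j\<in>UNIV. deg G l j)"
      using first_edge_factorisation less.prems(1) by blast
    then show ?thesis
      using less null_cylinder_cmp_imp_null by metis
  qed
qed

lemma null_vertex_imp_null_vertices:
  assumes "primitive G" "u \<in> vertices G" "measure \<mu> (cylinder G u) = 0" "w \<in> vertices G"
  shows "measure \<mu> (cylinder G w) = 0"
proof -
  obtain g where g: "g \<in> mor G" "rng G g = u" "src G g = w"
    using assms unfolding primitive_def by blast
  have "measure \<mu> (cylinder G g) \<le> measure \<mu> (cylinder G u)"
    using cylinder_subset_cylinder_rng[OF g(1)] g(2) assms(2) sets_cylinder
    unfolding vertices_def by (intro finite_measure_mono) auto
  then have "measure \<mu> (cylinder G g) = 0"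
    using assms(3) measure_nonneg[of \<mu> "cylinder G g"] by linarith
  then show ?thesis
    using null_cylinder_imp_null_src[OF g(1)] g(3) by simp
qed

lemma sum_vertex_cylinders_ge_one: "1 \<le> (\<Sum>v \<in> vertices G. measure \<mu> (cylinder G v))"
proof -
  have sets: "cylinder G v \<in> sets \<mu>" if "v \<in> vertices G" for v
    using that sets_cylinder unfolding vertices_def by simp
  have "1 = measure \<mu> (space \<mu>)"
    by (simp add: prob_space)
  also have "\<dots> \<le> measure \<mu> (\<Union>v \<in> vertices G. cylinder G v)"
    using inf_paths_subset_vertex_cylinders space_eq sets finite_vertices[OF finite_graph]
    by (intro finite_measure_mono) auto
  also have "\<dots> \<le> (\<Sum>v \<in> vertices G. measure \<mu> (cylinder G v))"
    using finite_vertices[OF finite_graph] sets by (rule measure_UNION_le)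
  finally show ?thesis .
qed

end

theorem corollary6p9:
  fixes G :: "('a, 'k::finite) kgraph"
    and phi :: "'k \<Rightarrow> (('k \<Rightarrow> nat) \<Rightarrow> ('k \<Rightarrow> nat) \<Rightarrow> 'a) \<Rightarrow> real"
    and lam :: "'k \<Rightarrow> real"
    and \<mu> :: "(('k \<Rightarrow> nat) \<Rightarrow> ('k \<Rightarrow> nat) \<Rightarrow> 'a) measure"
  assumes kg: "is_kgraph G"
    and sf: "source_free G"
    and fin: "finite_kgraph G"
    and prim: "primitive G"
    and ne: "mor G \<noteq> {}"
    and cont: "\<And>i. continuous_map (path_topology G) euclideanreal (phi i)"
    and cocycle: "\<And>i j x. x \<in> inf_paths G \<Longrightarrow>
        phi i x + phi j (shift i x) = phi j x + phi i (shift j x)"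
    and unique: "\<exists>!s. is_eigen_solution G phi s"
    and sol: "is_eigen_solution G phi (lam, \<mu>)"
  shows "\<forall>l \<in> mor G. measure \<mu> (cylinder G l) > 0"
proof (intro ballI)
  interpret ruelle_eigen_measure G phi lam \<mu>
    by unfold_locales (fact kg fin cont sol)+
  fix l
  assume l: "l \<in> mor G"
  show "measure \<mu> (cylinder G l) > 0"
  proof (rule ccontr)
    assume "\<not> measure \<mu> (cylinder G l) > 0"
    then have "measure \<mu> (cylinder G (src G l)) = 0"
      using l null_cylinder_imp_null_src measure_nonneg[of \<mu> "cylinder G l"] by simp
    moreover have "src G l \<in> vertices G"
      using l src_in_mor unfolding vertices_def by simp
    ultimately have "measure \<mu> (cylinder G w) = 0" if "w \<in> vertices G" for w
      using null_vertex_imp_null_vertices[OF prim] that by blast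
    then show False
      using sum_vertex_cylinders_ge_one by simp
  qed
qed

end
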